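(* Let $\gamma>0$ and $\mathbb{H}_{\gamma}=\{(z_1,z_2)\in\mathbb{C}^2:|z_1|^{\gamma}<|z_2|<1\}$. If $(\beta_1,\beta_2)\in\mathbb{Z}^2$ is such that both $(\beta_1,\beta_2)$ and $(\beta_1,-\beta_2)$ belong to $\mathcal{A}^2_\gamma$, then there exists a constant $C$ such that $$\mathbf{B}_\gamma\left(z_1^{\beta_1}\bar z_2^{\,\beta_2}\right)=C\,z_1^{\beta_1}z_2^{-\beta_2}.$$
   Context: $\mathcal{A}^2_\gamma$ is the set of $\alpha=(\alpha_1,\alpha_2)\in\mathbb{Z}^2$ with $\alpha_1\ge0$ such that $z_1^{\alpha_1}z_2^{\alpha_2}$ is square integrable (w.r.t. Lebesgue measure) on $\mathbb{H}_\gamma$; equivalently $\alpha_1\ge0$ and $\alpha_1+\gamma(\alpha_2+1)>-1$. $\mathbf{B}_\gamma$ is the Bergman projection of $\mathbb{H}_\gamma$, i.e. the orthogonal projection of $L^2(\mathbb{H}_\gamma)$ onto the holomorphic square integrable functions. *)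

theory Defs
  imports "HOL-Analysis.Analysis"
begin

definition Hdom :: "real \<Rightarrow> (complex \<times> complex) set" where
  "Hdom \<gamma> = {z. cmod (fst z) powr \<gamma> < cmod (snd z) \<and> cmod (snd z) < 1}"

text \<open>Holomorphy on an open subset of C^2: complex (Frechet) differentiability, i.e.
  real differentiability with a complex-linear derivative.\<close>
definition holo2 :: "(complex \<times> complex \<Rightarrow> complex) \<Rightarrow> (complex \<times> complex) set \<Rightarrow> bool" where
  "holo2 f S \<longleftrightarrow> (\<forall>z\<in>S. \<exists>L. (f has_derivative L) (at z) \<and>
      (\<forall>c w. L (c * fst w, c * snd w) = c * L w))"

definition sq_int :: "(complex \<times> complex \<Rightarrow> complex) \<Rightarrow> (complex \<times> complex) set \<Rightarrow> bool" where
  "sq_int f S \<longleftrightarrow> set_borel_measurable lborel S f \<and>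
      set_integrable lborel S (\<lambda>z. (cmod (f z))\<^sup>2)"

text \<open>Bergman space of H_gamma; functions are normalised to vanish off the domain so that
  elements are genuine functions (holomorphic functions agreeing a.e. agree on the domain).\<close>
definition bergman_space :: "real \<Rightarrow> (complex \<times> complex \<Rightarrow> complex) set" where
  "bergman_space \<gamma> = {g. holo2 g (Hdom \<gamma>) \<and> sq_int g (Hdom \<gamma>) \<and> (\<forall>z. z \<notin> Hdom \<gamma> \<longrightarrow> g z = 0)}"

definition l2_inner :: "real \<Rightarrow> (complex \<times> complex \<Rightarrow> complex) \<Rightarrow> (complex \<times> complex \<Rightarrow> complex) \<Rightarrow> complex" where
  "l2_inner \<gamma> f h = (LINT z:Hdom \<gamma>|lborel. f z * cnj (h z))"

definition bergman_proj :: "real \<Rightarrow> (complex \<times> complex \<Rightarrow> complex) \<Rightarrow> (complex \<times> complex \<Rightarrow> complex)" where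
  "bergman_proj \<gamma> f = (THE g. g \<in> bergman_space \<gamma> \<and>
      (\<forall>h\<in>bergman_space \<gamma>. l2_inner \<gamma> (\<lambda>z. f z - g z) h = 0))"

definition A2 :: "real \<Rightarrow> (int \<times> int) set" where
  "A2 \<gamma> = {\<alpha>. fst \<alpha> \<ge> 0 \<and>
      sq_int (\<lambda>z. fst z powi fst \<alpha> * snd z powi snd \<alpha>) (Hdom \<gamma>)}"

end

(* The torus acts on H_gamma by rotate2 c1 c2 (z1, z2) = (c1 z1, c2 z2), preserving Lebesgue
   measure and the Bergman space.  The function f = z1^b1 conj(z2)^b2 transforms under this action
   by the character c1^b1 c2^(-b2), like the monomial m = z1^b1 z2^(-b2).  Averaging over the torus
   shows that pairing such an equivariant function with h in the Bergman space only sees the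
   corresponding Fourier coefficient of h along torus orbits, and by Cauchy's theorem in each
   variable that coefficient is a constant multiple J m of the monomial.  Hence
   <f - C m, h> = conj J <f - C m, m>, which vanishes for C = <f, m> / <m, m>; so C m is the
   Bergman projection of f. *)

theory Submission
  imports Defs "HOL-Complex_Analysis.Complex_Analysis"
begin

section \<open>Measurability and square integrability\<close>

lemma borel_measurable_fst_borel [measurable]:
  "fst \<in> borel_measurable (borel :: ('a::topological_space \<times> 'b::topological_space) measure)"
  by (intro borel_measurable_continuous_onI continuous_on_fst continuous_on_id)

lemma borel_measurable_snd_borel [measurable]:
  "snd \<in> borel_measurable (borel :: ('a::topological_space \<times> 'b::topological_space) measure)"
  by (intro borel_measurable_continuous_onI continuous_on_snd continuous_on_id)

lemma borel_measurable_powi [measurable (raw)]: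
  "f \<in> borel_measurable M \<Longrightarrow> (\<lambda>x. f x powi k :: complex) \<in> borel_measurable M"
  by (cases "0 \<le> k") (simp_all add: power_int_def)

lemma borel_measurable_cnj [measurable (raw)]:
  "f \<in> borel_measurable M \<Longrightarrow> (\<lambda>x. cnj (f x :: complex)) \<in> borel_measurable M"
  using borel_measurable_continuous_onI[OF continuous_on_cnj[OF continuous_on_id]]
  by (rule measurable_compose[rotated])

definition square_integrable :: "'a measure \<Rightarrow> ('a \<Rightarrow> complex) \<Rightarrow> bool" where
  "square_integrable M u \<longleftrightarrow> u \<in> borel_measurable M \<and> integrable M (\<lambda>z. (cmod (u z))\<^sup>2)"

lemma square_integrable_cmult:
  assumes "square_integrable M u"
  shows "square_integrable M (\<lambda>z. c * u z)"
proof -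
  have [measurable]: "u \<in> borel_measurable M"
    using assms by (simp add: square_integrable_def)
  show ?thesis
    using assms unfolding square_integrable_def by (simp add: norm_mult power_mult_distrib)
qed

lemma square_integrable_diff:
  assumes "square_integrable M u" "square_integrable M v"
  shows "square_integrable M (\<lambda>z. u z - v z)"
proof -
  have [measurable]: "u \<in> borel_measurable M" "v \<in> borel_measurable M"
    and iu: "integrable M (\<lambda>z. (cmod (u z))\<^sup>2)" and iv: "integrable M (\<lambda>z. (cmod (v z))\<^sup>2)"
    using assms by (simp_all add: square_integrable_def)
  have bound: "(cmod (u z - v z))\<^sup>2 \<le> 2 * (cmod (u z))\<^sup>2 + 2 * (cmod (v z))\<^sup>2" for z
  proof -
    have "(cmod (u z - v z))\<^sup>2 \<le> (cmod (u z) + cmod (v z))\<^sup>2"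
      by (intro power_mono norm_triangle_ineq4) auto
    then show ?thesis
      using sum_squares_bound[of "cmod (u z)" "cmod (v z)"] by (simp add: power2_sum)
  qed
  have "integrable M (\<lambda>z. (cmod (u z - v z))\<^sup>2)"
  proof (rule Bochner_Integration.integrable_bound)
    show "integrable M (\<lambda>z. 2 * (cmod (u z))\<^sup>2 + 2 * (cmod (v z))\<^sup>2)"
      using iu iv by simp
    show "AE z in M. norm ((cmod (u z - v z))\<^sup>2) \<le> norm (2 * (cmod (u z))\<^sup>2 + 2 * (cmod (v z))\<^sup>2)"
      using bound by simp
  qed measurable
  moreover have "(\<lambda>z. u z - v z) \<in> borel_measurable M"
    by measurable
  ultimately show ?thesis
    unfolding square_integrable_def by simp
qed

lemma integrable_mult_cnj:
  assumes "square_integrable M u" "square_integrable M v"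
  shows "integrable M (\<lambda>z. u z * cnj (v z))"
proof (rule Bochner_Integration.integrable_bound)
  have [measurable]: "u \<in> borel_measurable M" "v \<in> borel_measurable M"
    and iu: "integrable M (\<lambda>z. (cmod (u z))\<^sup>2)" and iv: "integrable M (\<lambda>z. (cmod (v z))\<^sup>2)"
    using assms by (simp_all add: square_integrable_def)
  show "integrable M (\<lambda>z. (cmod (u z))\<^sup>2 + (cmod (v z))\<^sup>2)"
    using iu iv by simp
  show "(\<lambda>z. u z * cnj (v z)) \<in> borel_measurable M"
    by measurable
  have "cmod (u z) * cmod (v z) \<le> (cmod (u z))\<^sup>2 + (cmod (v z))\<^sup>2" for z
  proof -
    have "0 \<le> cmod (u z) * cmod (v z)"
      by simp
    then show ?thesis
      using sum_squares_bound[of "cmod (u z)" "cmod (v z)"] by linarith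
  qed
  then show "AE z in M. norm (u z * cnj (v z)) \<le> norm ((cmod (u z))\<^sup>2 + (cmod (v z))\<^sup>2)"
    by (simp add: norm_mult)
qed

lemma AE_zero_if_integral_square_zero:
  assumes "square_integrable M u" "(\<integral>z. (cmod (u z))\<^sup>2 \<partial>M) = 0"
  shows "AE z in M. u z = 0"
proof -
  have "AE z in M. (cmod (u z))\<^sup>2 = 0"
    using assms integral_nonneg_eq_0_iff_AE[where f = "\<lambda>z. (cmod (u z))\<^sup>2" and M = M]
    by (simp add: square_integrable_def)
  then show ?thesis
    by eventually_elim simp
qed

lemma integral_mult_cnj_self:
  "(\<integral>z. u z * cnj (u z) \<partial>M) = complex_of_real (\<integral>z. (cmod (u z))\<^sup>2 \<partial>M)"
  unfolding integral_complex_of_real[symmetric] by (simp add: complex_mult_cnj cmod_def)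

lemma integral_mult_cnj_eq_0:
  assumes v: "square_integrable M v" and "(\<integral>z. v z * cnj (v z) \<partial>M) = 0"
  shows "(\<integral>z. u z * cnj (v z) \<partial>M) = 0"
proof -
  have "AE z in M. v z = 0"
    using assms by (intro AE_zero_if_integral_square_zero[OF v]) (simp add: integral_mult_cnj_self)
  then show ?thesis
    by (intro integral_eq_zero_AE) (auto elim: AE_mp)
qed

lemma continuous_on_AE_zero:
  fixes d :: "'a::euclidean_space \<Rightarrow> 'b::real_normed_vector"
  assumes S: "open S" and d: "continuous_on S d" and ae: "AE z in lborel. d z = 0" and z: "z \<in> S"
  shows "d z = 0"
proof (rule ccontr)
  assume nz: "d z \<noteq> 0"
  define T where "T = S \<inter> d -` (- {0})"
  have "open T"
    unfolding T_def using continuous_open_preimage[OF d S, of "- {0}"] by auto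
  moreover have "AE x \<in> T in lebesgue. x \<in> {}"
    using AE_completion[OF ae] by eventually_elim (auto simp: T_def)
  moreover have "z \<in> T"
    using z nz by (simp add: T_def)
  ultimately show False
    using mem_closed_if_AE_lebesgue_open[of T "{}" z] by simp
qed

section \<open>Invariance of Lebesgue measure under rotations\<close>

lemma lborel_complex_eq_distr:
  "(lborel :: complex measure) = distr (lborel :: (real \<times> real) measure) borel (\<lambda>(x, y). Complex x y)"
proof (rule lborel_eqI)
  fix l u :: complex
  assume le: "\<And>b. b \<in> Basis \<Longrightarrow> l \<bullet> b \<le> u \<bullet> b"
  have m: "(\<lambda>(x, y). Complex x y) \<in> borel_measurable (lborel :: (real \<times> real) measure)"
    unfolding Complex_eq by (simp add: case_prod_beta' borel_measurable_continuous_onI continuous_intros)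
  have pre: "(\<lambda>(x, y). Complex x y) -` box l u \<inter> space lborel = box (Re l, Im l) (Re u, Im u)"
    by (auto simp: mem_box Basis_complex_def Basis_prod_def complex_inner_1_right complex_inner_i_right)
  have "Re l \<le> Re u" "Im l \<le> Im u"
    using le[of 1] le[of \<i>] by (auto simp: Basis_complex_def complex_inner_1_right complex_inner_i_right)
  then show "emeasure (distr lborel borel (\<lambda>(x, y). Complex x y)) (box l u) = (\<Prod>b\<in>Basis. (u - l) \<bullet> b)"
    using m pre by (simp add: emeasure_distr emeasure_lborel_box_eq Basis_complex_def Basis_prod_def
        complex_inner_1_right complex_inner_i_right)
qed simp

lemma distr_lborel_eqI:
  fixes T :: "'a::euclidean_space \<Rightarrow> 'a"
  assumes [measurable]: "T \<in> borel_measurable borel"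
    and invariant: "\<And>f. f \<in> borel_measurable borel \<Longrightarrow> (\<integral>\<^sup>+x. f (T x) \<partial>lborel) = (\<integral>\<^sup>+x. f x \<partial>lborel)"
  shows "distr lborel borel T = lborel"
proof (rule measure_eqI)
  fix A assume "A \<in> sets (distr lborel borel T)"
  then have [measurable]: "A \<in> sets borel" by simp
  have "emeasure (distr lborel borel T) A = emeasure lborel (T -` A)"
    by (simp add: emeasure_distr)
  also have "\<dots> = (\<integral>\<^sup>+x. indicator A (T x) \<partial>lborel)"
    using measurable_sets_borel[of T lborel A]
    by (simp add: indicator_vimage[symmetric] flip: nn_integral_indicator)
  also have "\<dots> = emeasure lborel A"
    by (simp add: invariant)
  finally show "emeasure (distr lborel borel T) A = emeasure lborel A" .
qed simp

lemma distr_lborel_comp: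
  assumes [measurable]: "S \<in> borel_measurable borel" "T \<in> borel_measurable borel"
    and "distr lborel borel S = lborel" "distr lborel borel T = lborel"
  shows "distr lborel borel (S \<circ> T) = lborel"
  using assms(3,4) distr_distr[of S borel borel T lborel] by simp

lemma nn_integral_lborel_pair:
  fixes f :: "real \<times> real \<Rightarrow> ennreal"
  assumes "f \<in> borel_measurable borel"
  shows "(\<integral>\<^sup>+p. f p \<partial>lborel) = (\<integral>\<^sup>+x. \<integral>\<^sup>+y. f (x, y) \<partial>lborel \<partial>lborel)"
    and "(\<integral>\<^sup>+p. f p \<partial>lborel) = (\<integral>\<^sup>+y. \<integral>\<^sup>+x. f (x, y) \<partial>lborel \<partial>lborel)"
  using assms sigma_finite_measure.nn_integral_fst[OF sigma_finite_lborel, where f=f] lborel_pair.nn_integral_snd[where f=f]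
  by (simp_all add: lborel_prod)

lemma distr_lborel_shear_snd:
  "distr lborel borel (\<lambda>(x, y). (x, y + a * x)) = (lborel :: (real \<times> real) measure)"
proof (rule distr_lborel_eqI)
  show shear: "(\<lambda>(x, y). (x, y + a * x)) \<in> borel_measurable (borel :: (real \<times> real) measure)"
    by (simp add: case_prod_beta' borel_measurable_continuous_onI continuous_intros)
  fix f :: "real \<times> real \<Rightarrow> ennreal" assume f[measurable]: "f \<in> borel_measurable borel"
  have "(\<integral>\<^sup>+x. \<integral>\<^sup>+y. f (x, y + a * x) \<partial>lborel \<partial>lborel) = (\<integral>\<^sup>+x. \<integral>\<^sup>+y. f (x, y) \<partial>lborel \<partial>lborel)"
    using nn_integral_real_affine[of "\<lambda>y. f (x, y)" 1 "a * x" for x]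
    by (simp add: add.commute)
  then show "(\<integral>\<^sup>+p. f (case p of (x, y) \<Rightarrow> (x, y + a * x)) \<partial>lborel) = (\<integral>\<^sup>+p. f p \<partial>lborel)"
    using measurable_compose[OF shear f] f by (simp add: nn_integral_lborel_pair(1))
qed

lemma distr_lborel_shear_fst:
  "distr lborel borel (\<lambda>(x, y). (x + a * y, y)) = (lborel :: (real \<times> real) measure)"
proof (rule distr_lborel_eqI)
  show shear: "(\<lambda>(x, y). (x + a * y, y)) \<in> borel_measurable (borel :: (real \<times> real) measure)"
    by (simp add: case_prod_beta' borel_measurable_continuous_onI continuous_intros)
  fix f :: "real \<times> real \<Rightarrow> ennreal" assume f[measurable]: "f \<in> borel_measurable borel"
  have "(\<integral>\<^sup>+y. \<integral>\<^sup>+x. f (x + a * y, y) \<partial>lborel \<partial>lborel) = (\<integral>\<^sup>+y. \<integral>\<^sup>+x. f (x, y) \<partial>lborel \<partial>lborel)"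
    using nn_integral_real_affine[of "\<lambda>x. f (x, y)" 1 "a * y" for y]
    by (simp add: add.commute)
  then show "(\<integral>\<^sup>+p. f (case p of (x, y) \<Rightarrow> (x + a * y, y)) \<partial>lborel) = (\<integral>\<^sup>+p. f p \<partial>lborel)"
    using measurable_compose[OF shear f] f by (simp add: nn_integral_lborel_pair(2))
qed

lemma distr_lborel_squeeze:
  assumes c: "c \<noteq> 0"
  shows "distr lborel borel (\<lambda>(x, y). (c * x, y / c)) = (lborel :: (real \<times> real) measure)"
proof (rule distr_lborel_eqI)
  show squeeze: "(\<lambda>(x, y). (c * x, y / c)) \<in> borel_measurable (borel :: (real \<times> real) measure)"
    using c by (simp add: case_prod_beta' borel_measurable_continuous_onI continuous_intros)
  fix f :: "real \<times> real \<Rightarrow> ennreal" assume f[measurable]: "f \<in> borel_measurable borel"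
  have inner: "(\<integral>\<^sup>+y. f (x, y / c) \<partial>lborel) = ennreal \<bar>c\<bar> * (\<integral>\<^sup>+y. f (x, y) \<partial>lborel)" for x
  proof -
    have "(\<integral>\<^sup>+y. f (x, y) \<partial>lborel) = ennreal (1 / \<bar>c\<bar>) * (\<integral>\<^sup>+y. f (x, y / c) \<partial>lborel)"
      using c nn_integral_real_affine[of "\<lambda>y. f (x, y)" "1 / c" 0] by simp
    moreover have "ennreal \<bar>c\<bar> * ennreal (1 / \<bar>c\<bar>) = 1"
      using c by (simp flip: ennreal_mult)
    ultimately show ?thesis
      by (metis mult.assoc mult_1)
  qed
  have outer: "(\<integral>\<^sup>+x. \<integral>\<^sup>+y. f (x, y) \<partial>lborel \<partial>lborel) = ennreal \<bar>c\<bar> * (\<integral>\<^sup>+x. \<integral>\<^sup>+y. f (c * x, y) \<partial>lborel \<partial>lborel)"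
    using c nn_integral_real_affine[of "\<lambda>x. \<integral>\<^sup>+y. f (x, y) \<partial>lborel" c 0] by simp
  have "(\<integral>\<^sup>+x. \<integral>\<^sup>+y. f (c * x, y / c) \<partial>lborel \<partial>lborel) = (\<integral>\<^sup>+x. \<integral>\<^sup>+y. f (x, y) \<partial>lborel \<partial>lborel)"
    by (simp add: inner nn_integral_cmult outer)
  then show "(\<integral>\<^sup>+p. f (case p of (x, y) \<Rightarrow> (c * x, y / c)) \<partial>lborel) = (\<integral>\<^sup>+p. f p \<partial>lborel)"
    using measurable_compose[OF squeeze f] by (simp add: nn_integral_lborel_pair(1))
qed

lemma distr_lborel_mult_unit_Re_nonzero:
  fixes c :: complex
  assumes c: "cmod c = 1" and a: "Re c \<noteq> 0"
  shows "distr lborel borel ((*) c) = lborel"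
proof -
  define a b where "a = Re c" and "b = Im c"
  (* multiplication by c = a + i b factors as shear, squeeze, shear *)
  define R :: "real \<times> real \<Rightarrow> real \<times> real" where
    "R = (\<lambda>(x, y). (x, y + (b / a) * x)) \<circ> (\<lambda>(x, y). (a * x, y / a)) \<circ> (\<lambda>(x, y). (x + (- (b / a)) * y, y))"
  have [measurable]: "(\<lambda>(x, y). Complex x y) \<in> borel_measurable (borel :: (real \<times> real) measure)"
    unfolding Complex_eq by (simp add: case_prod_beta' borel_measurable_continuous_onI continuous_intros)
  have Rm[measurable]: "R \<in> borel_measurable borel"
    unfolding R_def using a by (simp add: a_def o_def case_prod_beta' borel_measurable_continuous_onI continuous_intros)
  have "distr lborel borel R = lborel"
    unfolding R_def using a
    by (intro distr_lborel_comp distr_lborel_shear_fst distr_lborel_shear_snd distr_lborel_squeeze)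
       (simp_all add: a_def case_prod_beta' borel_measurable_continuous_onI continuous_intros)
  moreover have "(*) c \<circ> (\<lambda>(x, y). Complex x y) = (\<lambda>(x, y). Complex x y) \<circ> R"
  proof (rule ext, clarify)
    fix x y
    have "a\<^sup>2 + b\<^sup>2 = 1" using c by (simp add: a_def b_def cmod_def)
    then have "b * x + a * y = y / a + b / a * (a * (x - b / a * y))"
      using a by (simp add: a_def field_simps power2_eq_square) algebra
    then show "((*) c \<circ> (\<lambda>(x, y). Complex x y)) (x, y) = ((\<lambda>(x, y). Complex x y) \<circ> R) (x, y)"
      using a by (simp add: R_def a_def b_def complex_eq_iff field_simps)
  qed
  ultimately show ?thesis
    using distr_distr[of "(*) c" borel borel "\<lambda>(x, y). Complex x y" lborel]
      distr_distr[of "\<lambda>(x, y). Complex x y" borel borel R lborel]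
    by (simp add: lborel_complex_eq_distr[symmetric])
qed

lemma distr_lborel_mult_unit:
  fixes c :: complex
  assumes c: "cmod c = 1"
  shows "distr lborel borel ((*) c) = lborel"
proof (cases "Re c = 0")
  case True
  (* c = +-i, whose principal square root has positive real part *)
  define d where "d = csqrt c"
  have d: "cmod d = 1" "Re d \<noteq> 0"
    using c True by (simp_all add: d_def)
  have "(*) c = (*) d \<circ> (*) d"
    by (auto simp: d_def fun_eq_iff power2_eq_square[symmetric])
  then show ?thesis
    using d by (simp add: distr_lborel_comp distr_lborel_mult_unit_Re_nonzero)
qed (use c distr_lborel_mult_unit_Re_nonzero in blast)

definition rotate2 :: "complex \<Rightarrow> complex \<Rightarrow> complex \<times> complex \<Rightarrow> complex \<times> complex" where
  "rotate2 c1 c2 z = (c1 * fst z, c2 * snd z)"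

lemma borel_measurable_rotate2 [measurable (raw)]:
  assumes "f \<in> borel_measurable M" "g \<in> borel_measurable M" "w \<in> borel_measurable M"
  shows "(\<lambda>x. rotate2 (f x) (g x) (w x)) \<in> borel_measurable M"
  using assms unfolding rotate2_def by measurable

lemma distr_lborel_rotate2:
  assumes "cmod c1 = 1" "cmod c2 = 1"
  shows "distr lborel borel (rotate2 c1 c2) = lborel"
proof -
  have "(lborel :: (complex \<times> complex) measure) = distr lborel borel ((*) c1) \<Otimes>\<^sub>M distr lborel borel ((*) c2)"
    by (simp add: distr_lborel_mult_unit assms lborel_prod)
  also have "\<dots> = distr (lborel \<Otimes>\<^sub>M lborel) (borel \<Otimes>\<^sub>M borel) (\<lambda>(x, y). (c1 * x, c2 * y))"
    by (rule pair_measure_distr) (auto simp: distr_lborel_mult_unit assms intro: sigma_finite_lborel)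
  also have "\<dots> = distr lborel borel (rotate2 c1 c2)"
    by (simp add: lborel_prod borel_prod case_prod_beta' rotate2_def[abs_def])
  finally show ?thesis by simp
qed

lemma integral_rotate2:
  fixes f :: "complex \<times> complex \<Rightarrow> 'b::{banach, second_countable_topology}"
  assumes "cmod c1 = 1" "cmod c2 = 1" "f \<in> borel_measurable borel"
  shows "(\<integral>z. f (rotate2 c1 c2 z) \<partial>lborel) = (\<integral>z. f z \<partial>lborel)"
  using integral_distr[of "rotate2 c1 c2" lborel borel f] assms by (simp add: distr_lborel_rotate2)

lemma square_integrable_rotate2:
  assumes h: "square_integrable lborel h" and c: "cmod c1 = 1" "cmod c2 = 1"
  shows "square_integrable lborel (\<lambda>z. h (rotate2 c1 c2 z))"
proof -
  have [measurable]: "h \<in> borel_measurable borel"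
    using h by (simp add: square_integrable_def)
  have "integrable (distr lborel borel (rotate2 c1 c2)) (\<lambda>z. (cmod (h z))\<^sup>2)"
    using h c by (simp add: distr_lborel_rotate2 square_integrable_def)
  then show ?thesis
    unfolding square_integrable_def by (simp add: integrable_distr_eq)
qed

lemma cnj_powi_uminus_unit:
  fixes c :: complex
  assumes "cmod c = 1"
  shows "cnj c powi (- k) = c powi k"
proof -
  have "cnj c = inverse c"
    using complex_div_cnj[of 1 c] assms by (simp add: divide_inverse)
  then show ?thesis
    by (simp add: power_int_minus power_int_inverse)
qed

lemma integral_mult_cnj_rotate2:
  fixes u h :: "complex \<times> complex \<Rightarrow> complex"
  assumes [measurable]: "u \<in> borel_measurable borel" "h \<in> borel_measurable borel"
    and c: "cmod c1 = 1" "cmod c2 = 1"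
    and equivariant: "\<And>z. u (rotate2 c1 c2 z) = c1 powi k1 * c2 powi k2 * u z"
  shows "(\<integral>z. u z * cnj (h z) \<partial>lborel)
       = (\<integral>z. u z * cnj (h (rotate2 c1 c2 z) * c1 powi (- k1) * c2 powi (- k2)) \<partial>lborel)"
proof -
  have "(\<integral>z. u z * cnj (h z) \<partial>lborel) = (\<integral>z. u (rotate2 c1 c2 z) * cnj (h (rotate2 c1 c2 z)) \<partial>lborel)"
    using c by (intro integral_rotate2[symmetric]) auto
  also have "\<dots> = (\<integral>z. u z * cnj (h (rotate2 c1 c2 z) * c1 powi (- k1) * c2 powi (- k2)) \<partial>lborel)"
    using c by (simp add: equivariant cnj_powi_uminus_unit mult_ac)
  finally show ?thesis .
qed

section \<open>Circle averages of holomorphic functions\<close>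

definition turn :: "real \<Rightarrow> complex" where
  "turn t = exp (2 * of_real pi * \<i> * of_real t)"

lemma turn_add: "turn (s + t) = turn s * turn t"
  by (simp add: turn_def distrib_left exp_add)

lemma turn_minus_1: "turn (t - 1) = turn t"
  by (simp add: turn_def right_diff_distrib exp_diff exp_eq_1)

lemma turn_nonzero [simp]: "turn t \<noteq> 0"
  by (simp add: turn_def)

lemma norm_turn [simp]: "cmod (turn t) = 1"
  by (simp add: turn_def norm_exp_eq_Re)

lemma borel_measurable_turn [measurable]: "turn \<in> borel_measurable borel"
  unfolding turn_def by (intro borel_measurable_continuous_onI continuous_intros)

lemma continuous_on_turn [continuous_intros]:
  "continuous_on S f \<Longrightarrow> continuous_on S (\<lambda>x. turn (f x))"
  unfolding turn_def by (intro continuous_intros)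

lemma has_vector_derivative_turn:
  "((\<lambda>t. w * turn t) has_vector_derivative (w * (2 * of_real pi * \<i> * turn t))) (at t)"
proof -
  have "((\<lambda>t. exp (2 * of_real pi * \<i> * of_real t)) has_vector_derivative
          (exp (2 * of_real pi * \<i> * of_real t) * (2 * of_real pi * \<i>))) (at t)"
    by (rule has_vector_derivative_real_field) (auto intro!: derivative_eq_intros)
  then show ?thesis
    unfolding turn_def by (auto intro!: derivative_eq_intros simp: mult_ac)
qed

lemma circlepath_eq_turn: "circlepath 0 r = (\<lambda>t. complex_of_real r * turn t)"
  by (simp add: circlepath_def part_circlepath_def turn_def linepath_def fun_eq_iff mult_ac)

lemma contour_integral_turn_path:
  fixes F :: "complex \<Rightarrow> complex" and n :: int
  assumes w: "w \<noteq> 0" and F: "continuous_on {0..1} (\<lambda>t. F (w * turn t))"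
  shows "contour_integral (\<lambda>t. w * turn t) (\<lambda>\<zeta>. F \<zeta> * \<zeta> powi (n - 1))
     = 2 * of_real pi * \<i> * w powi n * integral {0..1} (\<lambda>t. F (w * turn t) * turn t powi n)"
proof -
  define K where "K t = 2 * of_real pi * \<i> * w powi n * (F (w * turn t) * turn t powi n)" for t
  have K: "F (w * turn t) * (w * turn t) powi (n - 1) * vector_derivative (\<lambda>t. w * turn t) (at t) = K t" for t
  proof -
    have "(w * turn t) powi (n - 1) * (w * turn t) = w powi n * turn t powi n"
      using w power_int_add[of "w * turn t" "n - 1" 1] by (simp add: power_int_mult_distrib)
    then show ?thesis
      unfolding K_def vector_derivative_at[OF has_vector_derivative_turn] by (simp add: mult_ac)
  qed
  have "continuous_on {0..1} K"
    unfolding K_def by (intro continuous_intros F) simp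
  then have "((\<lambda>\<zeta>. F \<zeta> * \<zeta> powi (n - 1)) has_contour_integral integral {0..1} K) (\<lambda>t. w * turn t)"
    unfolding has_contour_integral K by (simp add: integrable_continuous_real flip: has_integral_integral)
  then show ?thesis
    unfolding K_def by (simp add: contour_integral_unique)
qed

lemma contour_integral_turn_path_eq_circlepath:
  assumes "w \<noteq> 0"
  shows "contour_integral (\<lambda>t. w * turn t) G = contour_integral (circlepath 0 (cmod w)) G"
proof -
  define a where "a = Arg2pi w / (2 * pi)"
  have a: "a \<in> {0..1}"
    using Arg2pi[of w] by (auto simp: a_def field_simps)
  have "w = complex_of_real (cmod w) * exp (\<i> * complex_of_real (Arg2pi w))"
    using Arg2pi[of w] by (simp add: is_Arg_def)
  then have w: "w = complex_of_real (cmod w) * turn a"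
    by (simp add: a_def turn_def)
  have "(\<lambda>t. w * turn t) = shiftpath a (circlepath 0 (cmod w))"
  proof
    fix t
    have "w * turn t = complex_of_real (cmod w) * turn (a + t)"
      by (subst w) (simp add: turn_add)
    then show "w * turn t = shiftpath a (circlepath 0 (cmod w)) t"
      by (simp add: shiftpath_def circlepath_eq_turn turn_minus_1)
  qed
  then show ?thesis
    using a by (simp add: contour_integral_shiftpath)
qed

lemma homotopic_loops_circlepath_annulus:
  assumes r: "0 < r" "0 < r'"
    and annulus: "\<And>\<zeta>. min r r' \<le> cmod \<zeta> \<Longrightarrow> cmod \<zeta> \<le> max r r' \<Longrightarrow> \<zeta> \<in> S"
  shows "homotopic_loops (S - {0}) (circlepath 0 r) (circlepath 0 r')"
proof (rule homotopic_loops_linear)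
  fix t :: real
  show "closed_segment (circlepath 0 r t) (circlepath 0 r' t) \<subseteq> S - {0}"
  proof
    fix x assume "x \<in> closed_segment (circlepath 0 r t) (circlepath 0 r' t)"
    then obtain u where u: "0 \<le> u" "u \<le> 1" and x: "x = complex_of_real ((1 - u) * r + u * r') * turn t"
      by (auto simp: closed_segment_def circlepath_eq_turn scaleR_conv_of_real algebra_simps)
    have "min r r' \<le> (1 - u) * r + u * r'" "(1 - u) * r + u * r' \<le> max r r'"
      using u convex_bound_le[of r "max r r'" r' "1 - u" u] convex_bound_le[of "- r" "- min r r'" "- r'" "1 - u" u]
      by auto
    moreover have "cmod x = \<bar>(1 - u) * r + u * r'\<bar>"
      by (simp only: x norm_mult norm_turn norm_of_real mult_1_right)
    ultimately show "x \<in> S - {0}"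
      using annulus[of x] r by auto
  qed
qed simp_all

(* w^n times the n-th Fourier coefficient of F on the circle through w is a Laurent coefficient
   of F, hence does not depend on the radius. *)
lemma circle_coefficient_indep:
  fixes F :: "complex \<Rightarrow> complex" and n :: int
  assumes S: "open S" and F: "F holomorphic_on S" and w: "w \<noteq> 0" "w' \<noteq> 0"
    and annulus: "\<And>\<zeta>. min (cmod w) (cmod w') \<le> cmod \<zeta> \<Longrightarrow> cmod \<zeta> \<le> max (cmod w) (cmod w') \<Longrightarrow> \<zeta> \<in> S"
  shows "w powi n * integral {0..1} (\<lambda>t. F (w * turn t) * turn t powi n)
       = w' powi n * integral {0..1} (\<lambda>t. F (w' * turn t) * turn t powi n)"
proof -
  define G where "G \<zeta> = F \<zeta> * \<zeta> powi (n - 1)" for \<zeta>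
  have F_turn: "continuous_on {0..1} (\<lambda>t. F (v * turn t))" if "v = w \<or> v = w'" for v
  proof (rule continuous_on_compose2[OF holomorphic_on_imp_continuous_on[OF F]])
    show "continuous_on {0..1} (\<lambda>t. v * turn t)" by (intro continuous_intros)
    show "(\<lambda>t. v * turn t) ` {0..1} \<subseteq> S" using that by (auto intro!: annulus simp: norm_mult)
  qed
  have "G holomorphic_on (S - {0})"
    unfolding G_def by (intro holomorphic_intros holomorphic_on_subset[OF F]) auto
  moreover have "homotopic_loops (S - {0}) (circlepath 0 (cmod w)) (circlepath 0 (cmod w'))"
    using w annulus by (intro homotopic_loops_circlepath_annulus) auto
  ultimately have "contour_integral (circlepath 0 (cmod w)) G = contour_integral (circlepath 0 (cmod w')) G"
    using S by (intro Cauchy_theorem_homotopic_loops) auto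
  then have "contour_integral (\<lambda>t. w * turn t) G = contour_integral (\<lambda>t. w' * turn t) G"
    using w by (simp add: contour_integral_turn_path_eq_circlepath)
  then show ?thesis
    using w F_turn unfolding G_def by (simp add: contour_integral_turn_path)
qed

section \<open>The domain, holomorphy and monomials\<close>

lemma open_Hdom: "0 < \<gamma> \<Longrightarrow> open (Hdom \<gamma>)"
  unfolding Hdom_def
  by (intro open_Collect_conj open_Collect_less continuous_on_powr' continuous_intros) auto

lemma sets_Hdom [measurable]: "0 < \<gamma> \<Longrightarrow> Hdom \<gamma> \<in> sets borel"
  by (simp add: open_Hdom)

lemma Hdom_snd_nonzero: "z \<in> Hdom \<gamma> \<Longrightarrow> snd z \<noteq> 0"
  by (auto simp: Hdom_def)

lemma rotate2_in_Hdom_iff: "cmod c1 = 1 \<Longrightarrow> cmod c2 = 1 \<Longrightarrow> rotate2 c1 c2 z \<in> Hdom \<gamma> \<longleftrightarrow> z \<in> Hdom \<gamma>"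
  by (simp add: rotate2_def Hdom_def norm_mult)

lemma indicator_rotate2_Hdom:
  "cmod c1 = 1 \<Longrightarrow> cmod c2 = 1 \<Longrightarrow> indicator (Hdom \<gamma>) (rotate2 c1 c2 z) = (indicator (Hdom \<gamma>) z :: real)"
  by (simp add: indicator_def rotate2_in_Hdom_iff)

lemma holo2_continuous_on: "holo2 f S \<Longrightarrow> open S \<Longrightarrow> continuous_on S f"
  unfolding holo2_def by (metis continuous_at_imp_continuous_on has_derivative_continuous)

lemma holo2_holomorphic_on_line:
  assumes f: "holo2 f S"
  shows "(\<lambda>\<zeta>. f (a1 + \<zeta> * v1, a2 + \<zeta> * v2)) holomorphic_on {\<zeta>. (a1 + \<zeta> * v1, a2 + \<zeta> * v2) \<in> S}"
proof -
  have diff: "(\<lambda>\<zeta>. f (a1 + \<zeta> * v1, a2 + \<zeta> * v2)) field_differentiable at \<zeta>"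
    if in_S: "(a1 + \<zeta> * v1, a2 + \<zeta> * v2) \<in> S" for \<zeta>
  proof -
    obtain L where L: "(f has_derivative L) (at (a1 + \<zeta> * v1, a2 + \<zeta> * v2))"
      and linear: "\<forall>c w. L (c * fst w, c * snd w) = c * L w"
      using f in_S unfolding holo2_def by blast
    have line: "((\<lambda>\<zeta>. (a1 + \<zeta> * v1, a2 + \<zeta> * v2)) has_derivative (\<lambda>d. (d * v1, d * v2))) (at \<zeta>)"
      by (intro derivative_eq_intros) auto
    have "((\<lambda>\<zeta>. f (a1 + \<zeta> * v1, a2 + \<zeta> * v2)) has_derivative (\<lambda>d. L (d * v1, d * v2))) (at \<zeta>)"
      using has_derivative_compose[OF line L] by simp
    moreover have "(\<lambda>d. L (d * v1, d * v2)) = (*) (L (v1, v2))"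
      using linear[rule_format, of _ "(v1, v2)"] by (simp add: fun_eq_iff mult.commute)
    ultimately show ?thesis
      unfolding field_differentiable_def has_field_derivative_def by auto
  qed
  show ?thesis
    unfolding holomorphic_on_def
  proof
    fix \<zeta> assume "\<zeta> \<in> {\<zeta>. (a1 + \<zeta> * v1, a2 + \<zeta> * v2) \<in> S}"
    then show "(\<lambda>\<zeta>. f (a1 + \<zeta> * v1, a2 + \<zeta> * v2)) field_differentiable at \<zeta> within {\<zeta>. (a1 + \<zeta> * v1, a2 + \<zeta> * v2) \<in> S}"
      using field_differentiable_at_within[OF diff[of \<zeta>]] by simp
  qed
qed

lemma holo2_cong:
  assumes "holo2 f S" "open S" "\<And>z. z \<in> S \<Longrightarrow> g z = f z"
  shows "holo2 g S"
  unfolding holo2_def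
proof
  fix z assume z: "z \<in> S"
  then obtain L where "(f has_derivative L) (at z)" "\<forall>c w. L (c * fst w, c * snd w) = c * L w"
    using assms(1) unfolding holo2_def by blast
  moreover have "(g has_derivative L) (at z)"
    using has_derivative_transform_within_open[OF _ assms(2) z] assms(3) calculation(1) by metis
  ultimately show "\<exists>L. (g has_derivative L) (at z) \<and> (\<forall>c w. L (c * fst w, c * snd w) = c * L w)"
    by blast
qed

lemma holo2_cmult: "holo2 f S \<Longrightarrow> holo2 (\<lambda>z. c * f z) S"
  unfolding holo2_def by (fastforce intro: has_derivative_mult_right simp: mult.left_commute)

lemma holo2_diff:
  assumes f: "holo2 f S" and g: "holo2 g S"
  shows "holo2 (\<lambda>z. f z - g z) S"
  unfolding holo2_def
proof
  fix z assume z: "z \<in> S"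
  obtain L where L: "(f has_derivative L) (at z)" "\<forall>c w. L (c * fst w, c * snd w) = c * L w"
    using f z unfolding holo2_def by blast
  obtain M where M: "(g has_derivative M) (at z)" "\<forall>c w. M (c * fst w, c * snd w) = c * M w"
    using g z unfolding holo2_def by blast
  have "((\<lambda>z. f z - g z) has_derivative (\<lambda>w. L w - M w)) (at z)"
    by (rule has_derivative_diff[OF L(1) M(1)])
  moreover have "\<forall>c w. L (c * fst w, c * snd w) - M (c * fst w, c * snd w) = c * (L w - M w)"
    using L(2) M(2) by (simp add: right_diff_distrib)
  ultimately show "\<exists>L. ((\<lambda>z. f z - g z) has_derivative L) (at z) \<and> (\<forall>c w. L (c * fst w, c * snd w) = c * L w)"
    by blast
qed

definition monomial :: "int \<Rightarrow> int \<Rightarrow> complex \<times> complex \<Rightarrow> complex" where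
  "monomial k1 k2 z = fst z powi k1 * snd z powi k2"

lemma holo2_monomial:
  assumes k1: "0 \<le> k1" and S: "\<forall>z\<in>S. snd z \<noteq> 0"
  shows "holo2 (monomial k1 k2) S"
  unfolding holo2_def
proof
  fix z assume "z \<in> S"
  define n where "n = nat k1"
  have mono: "monomial k1 k2 = (\<lambda>z. fst z ^ n * snd z powi k2)"
    using k1 by (simp add: fun_eq_iff monomial_def n_def power_int_def)
  let ?L = "\<lambda>d. fst d * (of_nat n * fst z ^ (n - 1)) * snd z powi k2
                 + fst z ^ n * (snd d * (of_int k2 * snd z powi (k2 - 1)))"
  have "((\<lambda>z. fst z ^ n * snd z powi k2) has_derivative ?L) (at z)"
    using S \<open>z \<in> S\<close> by (auto intro!: derivative_eq_intros simp: algebra_simps)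
  moreover have "\<forall>c w. ?L (c * fst w, c * snd w) = c * ?L w"
    by (simp add: algebra_simps)
  ultimately show "\<exists>L. (monomial k1 k2 has_derivative L) (at z) \<and> (\<forall>c w. L (c * fst w, c * snd w) = c * L w)"
    unfolding mono by blast
qed

lemma borel_measurable_monomial [measurable]: "monomial k1 k2 \<in> borel_measurable borel"
  unfolding monomial_def[abs_def] by measurable

lemma monomial_rotate2: "monomial k1 k2 (rotate2 c1 c2 z) = c1 powi k1 * c2 powi k2 * monomial k1 k2 z"
  unfolding monomial_def rotate2_def by (simp add: power_int_mult_distrib)

section \<open>The Bergman space and the Bergman projection\<close>

lemma sq_int_iff_square_integrable:
  "sq_int f S \<longleftrightarrow> square_integrable lborel (\<lambda>z. indicator S z *\<^sub>R f z)"
proof -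
  have "(\<lambda>z. (cmod (indicator S z *\<^sub>R f z))\<^sup>2) = (\<lambda>z. indicator S z *\<^sub>R (cmod (f z))\<^sup>2)"
    by (auto simp: fun_eq_iff split: split_indicator)
  then show ?thesis
    by (simp add: sq_int_def square_integrable_def set_borel_measurable_def set_integrable_def)
qed

lemma sq_int_norm_cong:
  assumes "sq_int g S" "S \<in> sets borel" "f \<in> borel_measurable borel" "\<And>z. cmod (f z) = cmod (g z)"
  shows "sq_int f S"
  using assms unfolding sq_int_def set_borel_measurable_def by simp measurable

lemma bergman_space_iff:
  "h \<in> bergman_space \<gamma> \<longleftrightarrow>
     holo2 h (Hdom \<gamma>) \<and> square_integrable lborel h \<and> (\<forall>z. z \<notin> Hdom \<gamma> \<longrightarrow> h z = 0)"
proof -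
  have "(\<lambda>z. indicator (Hdom \<gamma>) z *\<^sub>R h z) = h" if "\<forall>z. z \<notin> Hdom \<gamma> \<longrightarrow> h z = 0"
    using that by (auto simp: fun_eq_iff split: split_indicator)
  then show ?thesis
    unfolding bergman_space_def sq_int_iff_square_integrable by auto
qed

lemma bergman_space_diff:
  assumes "g \<in> bergman_space \<gamma>" "h \<in> bergman_space \<gamma>"
  shows "(\<lambda>z. g z - h z) \<in> bergman_space \<gamma>"
  using assms by (simp add: bergman_space_iff holo2_diff square_integrable_diff)

lemma restricted_monomial_in_bergman_space:
  assumes \<gamma>: "0 < \<gamma>" and k1: "0 \<le> k1" and m: "sq_int (monomial k1 k2) (Hdom \<gamma>)"
  shows "(\<lambda>z. C * (indicator (Hdom \<gamma>) z *\<^sub>R monomial k1 k2 z)) \<in> bergman_space \<gamma>"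
  unfolding bergman_space_iff
proof (intro conjI allI impI)
  have "holo2 (\<lambda>z. C * monomial k1 k2 z) (Hdom \<gamma>)"
    using k1 by (intro holo2_cmult holo2_monomial) (auto dest: Hdom_snd_nonzero)
  then show "holo2 (\<lambda>z. C * (indicator (Hdom \<gamma>) z *\<^sub>R monomial k1 k2 z)) (Hdom \<gamma>)"
    by (rule holo2_cong[OF _ open_Hdom[OF \<gamma>]]) simp
  show "square_integrable lborel (\<lambda>z. C * (indicator (Hdom \<gamma>) z *\<^sub>R monomial k1 k2 z))"
    using m by (intro square_integrable_cmult) (simp add: sq_int_iff_square_integrable)
qed simp

lemma l2_inner_eq_integral:
  "l2_inner \<gamma> f h = (\<integral>z. (indicator (Hdom \<gamma>) z *\<^sub>R f z) * cnj (h z) \<partial>lborel)"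
  unfolding l2_inner_def set_lebesgue_integral_def
  by (rule Bochner_Integration.integral_cong) (auto split: split_indicator)

lemma l2_inner_diff_cmult:
  assumes u: "square_integrable lborel u" and v: "square_integrable lborel v" and h: "square_integrable lborel h"
    and f: "\<And>z. z \<in> Hdom \<gamma> \<Longrightarrow> f z = u z"
    and outside: "\<And>z. z \<notin> Hdom \<gamma> \<Longrightarrow> u z = 0" "\<And>z. z \<notin> Hdom \<gamma> \<Longrightarrow> v z = 0"
  shows "l2_inner \<gamma> (\<lambda>z. f z - c * v z) h
       = (\<integral>z. u z * cnj (h z) \<partial>lborel) - c * (\<integral>z. v z * cnj (h z) \<partial>lborel)"
proof -
  have "l2_inner \<gamma> (\<lambda>z. f z - c * v z) h = (\<integral>z. u z * cnj (h z) - c * (v z * cnj (h z)) \<partial>lborel)"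
    unfolding l2_inner_eq_integral
    by (intro Bochner_Integration.integral_cong) (auto simp: f outside algebra_simps split: split_indicator)
  then show ?thesis
    using integrable_mult_cnj[OF u h] integrable_mult_cnj[OF v h] by simp
qed

lemma bergman_space_eq_zero_if_norm_zero:
  assumes \<gamma>: "0 < \<gamma>" and d: "d \<in> bergman_space \<gamma>" and norm: "l2_inner \<gamma> d d = 0"
  shows "d = (\<lambda>_. 0)"
proof
  fix z
  have holo: "holo2 d (Hdom \<gamma>)" and sq: "square_integrable lborel d"
    and outside: "\<And>z. z \<notin> Hdom \<gamma> \<Longrightarrow> d z = 0"
    using d by (auto simp: bergman_space_iff)
  have "l2_inner \<gamma> d d = (\<integral>z. d z * cnj (d z) \<partial>lborel)"
    unfolding l2_inner_eq_integral
    by (rule Bochner_Integration.integral_cong) (auto simp: outside split: split_indicator)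
  then have "l2_inner \<gamma> d d = complex_of_real (\<integral>z. (cmod (d z))\<^sup>2 \<partial>lborel)"
    by (simp only: integral_mult_cnj_self)
  then have "(\<integral>z. (cmod (d z))\<^sup>2 \<partial>lborel) = 0"
    using norm by simp
  then have "AE z in lborel. d z = 0"
    by (rule AE_zero_if_integral_square_zero[OF sq])
  then show "d z = 0"
    using continuous_on_AE_zero[OF open_Hdom[OF \<gamma>] holo2_continuous_on[OF holo open_Hdom[OF \<gamma>]]] outside
    by blast
qed

lemma bergman_proj_eqI:
  assumes \<gamma>: "0 < \<gamma>" and f: "sq_int f (Hdom \<gamma>)" and g: "g \<in> bergman_space \<gamma>"
    and orth: "\<And>h. h \<in> bergman_space \<gamma> \<Longrightarrow> l2_inner \<gamma> (\<lambda>z. f z - g z) h = 0"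
  shows "bergman_proj \<gamma> f = g"
  unfolding bergman_proj_def
proof (rule the_equality)
  show "g \<in> bergman_space \<gamma> \<and> (\<forall>h\<in>bergman_space \<gamma>. l2_inner \<gamma> (\<lambda>z. f z - g z) h = 0)"
    using g orth by blast
  fix g' assume g': "g' \<in> bergman_space \<gamma> \<and> (\<forall>h\<in>bergman_space \<gamma>. l2_inner \<gamma> (\<lambda>z. f z - g' z) h = 0)"
  define d where "d z = g' z - g z" for z
  define u where "u z = indicator (Hdom \<gamma>) z *\<^sub>R f z" for z
  have d: "d \<in> bergman_space \<gamma>"
    unfolding d_def using g g' by (simp add: bergman_space_diff)
  have u: "square_integrable lborel u"
    using f by (simp add: u_def[abs_def] sq_int_iff_square_integrable)
  have inner: "l2_inner \<gamma> (\<lambda>z. f z - k z) d = (\<integral>z. (u z - k z) * cnj (d z) \<partial>lborel)"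
    and integrable: "integrable lborel (\<lambda>z. (u z - k z) * cnj (d z))"
    if "k \<in> bergman_space \<gamma>" for k
  proof -
    show "l2_inner \<gamma> (\<lambda>z. f z - k z) d = (\<integral>z. (u z - k z) * cnj (d z) \<partial>lborel)"
      unfolding l2_inner_eq_integral u_def
      using that by (intro Bochner_Integration.integral_cong) (auto simp: bergman_space_iff split: split_indicator)
    show "integrable lborel (\<lambda>z. (u z - k z) * cnj (d z))"
      using that d u by (intro integrable_mult_cnj square_integrable_diff) (auto simp: bergman_space_iff)
  qed
  have "l2_inner \<gamma> d d = (\<integral>z. (u z - g z) * cnj (d z) - (u z - g' z) * cnj (d z) \<partial>lborel)"
    unfolding l2_inner_eq_integral
    by (rule Bochner_Integration.integral_cong)
       (use d in \<open>auto simp: d_def algebra_simps bergman_space_iff split: split_indicator\<close>)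
  also have "\<dots> = l2_inner \<gamma> (\<lambda>z. f z - g z) d - l2_inner \<gamma> (\<lambda>z. f z - g' z) d"
    using g g' by (simp add: inner integrable)
  also have "\<dots> = 0"
    using orth d g' by simp
  finally show "g' = g"
    using bergman_space_eq_zero_if_norm_zero[OF \<gamma> d] by (simp add: d_def fun_eq_iff)
qed

section \<open>Fourier coefficients along torus orbits\<close>

definition fourier_coeff :: "int \<Rightarrow> int \<Rightarrow> (complex \<times> complex \<Rightarrow> complex) \<Rightarrow> complex \<times> complex \<Rightarrow> complex" where
  "fourier_coeff k1 k2 h z = (LINT p:cbox (0, 0) (1, 1)|lborel.
      h (rotate2 (turn (fst p)) (turn (snd p)) z) * turn (fst p) powi (- k1) * turn (snd p) powi (- k2))"

lemma borel_measurable_fourier_coeff [measurable]: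
  assumes [measurable]: "h \<in> borel_measurable borel"
  shows "fourier_coeff k1 k2 h \<in> borel_measurable borel"
proof -
  have "(\<lambda>(z, p). indicator (cbox (0, 0) (1, 1)) p *\<^sub>R (h (rotate2 (turn (fst p)) (turn (snd p)) z)
      * turn (fst p) powi (- k1) * turn (snd p) powi (- k2)))
      \<in> borel_measurable (lborel \<Otimes>\<^sub>M (lborel :: (real \<times> real) measure))"
    unfolding lborel_prod case_prod_beta' by measurable
  from sigma_finite_measure.borel_measurable_lebesgue_integral[OF sigma_finite_lborel this]
  show ?thesis
    unfolding fourier_coeff_def[abs_def] set_lebesgue_integral_def by simp
qed

lemma continuous_on_fourier_integrand:
  assumes h: "continuous_on (Hdom \<gamma>) h" and z: "z \<in> Hdom \<gamma>"
  shows "continuous_on UNIV (\<lambda>p::real \<times> real.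
           h (rotate2 (turn (fst p)) (turn (snd p)) z) * turn (fst p) powi (- k1) * turn (snd p) powi (- k2))"
proof -
  have "continuous_on UNIV (\<lambda>p::real \<times> real. h (rotate2 (turn (fst p)) (turn (snd p)) z))"
  proof (rule continuous_on_compose2[OF h])
    show "continuous_on UNIV (\<lambda>p::real \<times> real. rotate2 (turn (fst p)) (turn (snd p)) z)"
      unfolding rotate2_def by (intro continuous_intros)
    show "range (\<lambda>p::real \<times> real. rotate2 (turn (fst p)) (turn (snd p)) z) \<subseteq> Hdom \<gamma>"
      using z by (auto simp: rotate2_in_Hdom_iff)
  qed
  then show ?thesis
    by (intro continuous_intros) auto
qed

lemma fourier_coeff_iterated:
  assumes h: "continuous_on (Hdom \<gamma>) h" and z: "z \<in> Hdom \<gamma>"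
  shows "fourier_coeff k1 k2 h z = integral {0..1} (\<lambda>s. integral {0..1} (\<lambda>t.
           h (fst z * turn s, snd z * turn t) * turn s powi (- k1) * turn t powi (- k2)))"
    and "fourier_coeff k1 k2 h z = integral {0..1} (\<lambda>t. integral {0..1} (\<lambda>s.
           h (fst z * turn s, snd z * turn t) * turn s powi (- k1) * turn t powi (- k2)))"
proof -
  define k where "k p = h (rotate2 (turn (fst p)) (turn (snd p)) z) * turn (fst p) powi (- k1) * turn (snd p) powi (- k2)"
    for p :: "real \<times> real"
  have k: "continuous_on (cbox (0, 0) (1, 1)) k"
    unfolding k_def using continuous_on_fourier_integrand[OF h z] continuous_on_subset by blast
  have "fourier_coeff k1 k2 h z = integral (cbox (0, 0) (1, 1)) k"
    unfolding fourier_coeff_def k_def[symmetric]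
    by (rule set_borel_integral_eq_integral(2)) (simp add: set_integrable_def borel_integrable_compact k)
  also have "\<dots> = integral {0..1} (\<lambda>s. integral {0..1} (\<lambda>t. k (s, t)))"
    using integral_prod_continuous[OF k] by (simp add: cbox_interval)
  finally have first: "fourier_coeff k1 k2 h z = integral {0..1} (\<lambda>s. integral {0..1} (\<lambda>t. k (s, t)))" .
  also have "\<dots> = integral {0..1} (\<lambda>t. integral {0..1} (\<lambda>s. k (s, t)))"
    using integral_swap_continuous[of 0 0 1 1 "\<lambda>s t. k (s, t)"] k by (simp add: cbox_interval)
  finally have second: "fourier_coeff k1 k2 h z = integral {0..1} (\<lambda>t. integral {0..1} (\<lambda>s. k (s, t)))" .
  have "k (s, t) = h (fst z * turn s, snd z * turn t) * turn s powi (- k1) * turn t powi (- k2)" for s t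
    by (simp add: k_def rotate2_def mult.commute)
  then show "fourier_coeff k1 k2 h z = integral {0..1} (\<lambda>s. integral {0..1} (\<lambda>t.
           h (fst z * turn s, snd z * turn t) * turn s powi (- k1) * turn t powi (- k2)))"
    and "fourier_coeff k1 k2 h z = integral {0..1} (\<lambda>t. integral {0..1} (\<lambda>s.
           h (fst z * turn s, snd z * turn t) * turn s powi (- k1) * turn t powi (- k2)))"
    using first second by simp_all
qed

lemma fourier_coeff_scale_snd:
  assumes \<gamma>: "0 < \<gamma>" and h: "holo2 h (Hdom \<gamma>)" and z: "(z1, z2) \<in> Hdom \<gamma>" and z': "(z1, z2') \<in> Hdom \<gamma>"
  shows "z2 powi (- k2) * fourier_coeff k1 k2 h (z1, z2) = z2' powi (- k2) * fourier_coeff k1 k2 h (z1, z2')"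
proof -
  have hc: "continuous_on (Hdom \<gamma>) h"
    by (rule holo2_continuous_on[OF h open_Hdom[OF \<gamma>]])
  have circle: "z2 powi (- k2) * integral {0..1} (\<lambda>t. h (z1 * turn s, z2 * turn t) * turn t powi (- k2))
      = z2' powi (- k2) * integral {0..1} (\<lambda>t. h (z1 * turn s, z2' * turn t) * turn t powi (- k2))" for s
  proof (rule circle_coefficient_indep[where S = "{\<omega>. (z1 * turn s, \<omega>) \<in> Hdom \<gamma>}"])
    show "open {\<omega>. (z1 * turn s, \<omega>) \<in> Hdom \<gamma>}"
      using open_Hdom[OF \<gamma>] unfolding vimage_def[symmetric]
      by (intro continuous_open_vimage continuous_intros) auto
    show "(\<lambda>\<omega>. h (z1 * turn s, \<omega>)) holomorphic_on {\<omega>. (z1 * turn s, \<omega>) \<in> Hdom \<gamma>}"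
      using holo2_holomorphic_on_line[OF h, of "z1 * turn s" 0 0 1] by simp
    show "z2 \<noteq> 0" "z2' \<noteq> 0"
      using z z' by (auto dest: Hdom_snd_nonzero)
    fix \<zeta> assume "min (cmod z2) (cmod z2') \<le> cmod \<zeta>" "cmod \<zeta> \<le> max (cmod z2) (cmod z2')"
    then show "\<zeta> \<in> {\<omega>. (z1 * turn s, \<omega>) \<in> Hdom \<gamma>}"
      using z z' by (auto simp: Hdom_def norm_mult min_def max_def split: if_splits)
  qed
  have "z2 powi (- k2) * fourier_coeff k1 k2 h (z1, z2) = integral {0..1} (\<lambda>s. turn s powi (- k1) *
      (z2 powi (- k2) * integral {0..1} (\<lambda>t. h (z1 * turn s, z2 * turn t) * turn t powi (- k2))))"
    unfolding fourier_coeff_iterated(1)[OF hc z]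
    by (simp add: mult_ac flip: integral_mult_right integral_mult_left)
  also have "\<dots> = integral {0..1} (\<lambda>s. turn s powi (- k1) *
      (z2' powi (- k2) * integral {0..1} (\<lambda>t. h (z1 * turn s, z2' * turn t) * turn t powi (- k2))))"
    by (simp only: circle)
  also have "\<dots> = z2' powi (- k2) * fourier_coeff k1 k2 h (z1, z2')"
    unfolding fourier_coeff_iterated(1)[OF hc z']
    by (simp add: mult_ac flip: integral_mult_right integral_mult_left)
  finally show ?thesis .
qed

lemma fourier_coeff_scale_fst:
  assumes \<gamma>: "0 < \<gamma>" and h: "holo2 h (Hdom \<gamma>)" and z: "(z1, z2) \<in> Hdom \<gamma>" and z': "(z1', z2) \<in> Hdom \<gamma>"
    and nonzero: "z1 \<noteq> 0" "z1' \<noteq> 0"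
  shows "z1 powi (- k1) * fourier_coeff k1 k2 h (z1, z2) = z1' powi (- k1) * fourier_coeff k1 k2 h (z1', z2)"
proof -
  have hc: "continuous_on (Hdom \<gamma>) h"
    by (rule holo2_continuous_on[OF h open_Hdom[OF \<gamma>]])
  have circle: "z1 powi (- k1) * integral {0..1} (\<lambda>s. h (z1 * turn s, z2 * turn t) * turn s powi (- k1))
      = z1' powi (- k1) * integral {0..1} (\<lambda>s. h (z1' * turn s, z2 * turn t) * turn s powi (- k1))" for t
  proof (rule circle_coefficient_indep[where S = "{\<zeta>. (\<zeta>, z2 * turn t) \<in> Hdom \<gamma>}"])
    show "open {\<zeta>. (\<zeta>, z2 * turn t) \<in> Hdom \<gamma>}"
      using open_Hdom[OF \<gamma>] unfolding vimage_def[symmetric]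
      by (intro continuous_open_vimage continuous_intros) auto
    show "(\<lambda>\<zeta>. h (\<zeta>, z2 * turn t)) holomorphic_on {\<zeta>. (\<zeta>, z2 * turn t) \<in> Hdom \<gamma>}"
      using holo2_holomorphic_on_line[OF h, of 0 1 "z2 * turn t" 0] by simp
    fix \<zeta> assume "min (cmod z1) (cmod z1') \<le> cmod \<zeta>" "cmod \<zeta> \<le> max (cmod z1) (cmod z1')"
    then have "cmod \<zeta> powr \<gamma> \<le> max (cmod z1) (cmod z1') powr \<gamma>"
      using \<gamma> by (intro powr_mono2) auto
    moreover have "max (cmod z1) (cmod z1') powr \<gamma> < cmod z2"
      using z z' by (auto simp: Hdom_def max_def)
    ultimately show "\<zeta> \<in> {\<zeta>. (\<zeta>, z2 * turn t) \<in> Hdom \<gamma>}"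
      using z by (auto simp: Hdom_def norm_mult)
  qed (use nonzero in auto)
  have "z1 powi (- k1) * fourier_coeff k1 k2 h (z1, z2) = integral {0..1} (\<lambda>t. turn t powi (- k2) *
      (z1 powi (- k1) * integral {0..1} (\<lambda>s. h (z1 * turn s, z2 * turn t) * turn s powi (- k1))))"
    unfolding fourier_coeff_iterated(2)[OF hc z]
    by (simp add: mult_ac flip: integral_mult_right integral_mult_left)
  also have "\<dots> = integral {0..1} (\<lambda>t. turn t powi (- k2) *
      (z1' powi (- k1) * integral {0..1} (\<lambda>s. h (z1' * turn s, z2 * turn t) * turn s powi (- k1))))"
    by (simp only: circle)
  also have "\<dots> = z1' powi (- k1) * fourier_coeff k1 k2 h (z1', z2)"
    unfolding fourier_coeff_iterated(2)[OF hc z']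
    by (simp add: mult_ac flip: integral_mult_right integral_mult_left)
  finally show ?thesis .
qed

lemma fourier_coeff_normalized_eq:
  assumes \<gamma>: "0 < \<gamma>" and h: "holo2 h (Hdom \<gamma>)"
    and z: "(z1, z2) \<in> Hdom \<gamma>" "z1 \<noteq> 0" and z': "(z1', z2') \<in> Hdom \<gamma>" "z1' \<noteq> 0"
  shows "z1 powi (- k1) * z2 powi (- k2) * fourier_coeff k1 k2 h (z1, z2)
       = z1' powi (- k1) * z2' powi (- k2) * fourier_coeff k1 k2 h (z1', z2')"
proof -
  (* passing through the larger of the two second coordinates keeps both first coordinates admissible *)
  define w where "w = (if cmod z2' \<le> cmod z2 then z2 else z2')"
  have w: "(z1, w) \<in> Hdom \<gamma>" "(z1', w) \<in> Hdom \<gamma>"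
    using z z' by (auto simp: w_def Hdom_def)
  have "z1 powi (- k1) * z2 powi (- k2) * fourier_coeff k1 k2 h (z1, z2)
      = w powi (- k2) * (z1 powi (- k1) * fourier_coeff k1 k2 h (z1, w))"
    using fourier_coeff_scale_snd[OF \<gamma> h z(1) w(1)] by (simp add: mult_ac)
  also have "\<dots> = w powi (- k2) * (z1' powi (- k1) * fourier_coeff k1 k2 h (z1', w))"
    using fourier_coeff_scale_fst[OF \<gamma> h w z(2) z'(2)] by simp
  also have "\<dots> = z1' powi (- k1) * z2' powi (- k2) * fourier_coeff k1 k2 h (z1', z2')"
    using fourier_coeff_scale_snd[OF \<gamma> h w(2) z'(1)] by (simp add: mult_ac)
  finally show ?thesis .
qed

lemma fourier_coeff_eq_monomial:
  assumes \<gamma>: "0 < \<gamma>" and h: "holo2 h (Hdom \<gamma>)"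
  obtains J where "\<And>z. z \<in> Hdom \<gamma> \<Longrightarrow> fst z \<noteq> 0 \<Longrightarrow> fourier_coeff k1 k2 h z = J * monomial k1 k2 z"
proof (cases "\<exists>z0\<in>Hdom \<gamma>. fst z0 \<noteq> 0")
  case True
  then obtain z0 where z0: "z0 \<in> Hdom \<gamma>" "fst z0 \<noteq> 0"
    by blast
  define J where "J = fst z0 powi (- k1) * snd z0 powi (- k2) * fourier_coeff k1 k2 h z0"
  show ?thesis
  proof (rule that)
    fix z assume z: "z \<in> Hdom \<gamma>" "fst z \<noteq> 0"
    have "fst z powi (- k1) * snd z powi (- k2) * fourier_coeff k1 k2 h z = J"
      using fourier_coeff_normalized_eq[OF \<gamma> h, of "fst z" "snd z" "fst z0" "snd z0"] z z0
      by (simp add: J_def)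
    then show "fourier_coeff k1 k2 h z = J * monomial k1 k2 z"
      using z Hdom_snd_nonzero[OF z(1)]
      by (auto simp: monomial_def power_int_minus field_simps)
  qed
qed (use that in blast)

section \<open>Averaging over the torus\<close>

lemma integral_indicator_average:
  fixes F :: "'a::euclidean_space \<Rightarrow> 'b::euclidean_space \<Rightarrow> 'c::{banach, second_countable_topology}"
  assumes F: "(\<lambda>x. F (fst x) (snd x)) \<in> borel_measurable borel"
    and Q: "Q \<in> sets borel" "emeasure lborel Q < \<infinity>"
    and integrable: "\<And>p. integrable lborel (F p)"
    and norm: "\<And>p. (\<integral>z. norm (F p z) \<partial>lborel) = B"
    and const: "\<And>p. (\<integral>z. F p z \<partial>lborel) = C"
  shows "(\<integral>z. (\<integral>p. indicator Q p *\<^sub>R F p z \<partial>lborel) \<partial>lborel) = measure lborel Q *\<^sub>R C"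
proof -
  define G where "G x = indicator Q (fst x) *\<^sub>R F (fst x) (snd x)" for x
  have "G \<in> borel_measurable (lborel \<Otimes>\<^sub>M lborel)"
    unfolding lborel_prod G_def using F Q(1) by measurable
  then have "integrable (lborel \<Otimes>\<^sub>M lborel) G"
  proof (rule lborel_pair.Fubini_integrable)
    have "(\<lambda>p. \<integral>z. norm (G (p, z)) \<partial>lborel) = (\<lambda>p. indicator Q p * B)"
      by (auto simp: G_def norm split: split_indicator)
    then show "integrable lborel (\<lambda>p. \<integral>z. norm (G (p, z)) \<partial>lborel)"
      using Q by (simp add: integrable_indicator_iff)
    show "AE p in lborel. integrable lborel (\<lambda>z. G (p, z))"
      using integrable by (simp add: G_def)
  qed
  then have "(\<integral>z. \<integral>p. G (p, z) \<partial>lborel \<partial>lborel) = (\<integral>p. \<integral>z. G (p, z) \<partial>lborel \<partial>lborel)"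
    using lborel_pair.Fubini_integral[of "\<lambda>p z. G (p, z)"] by simp
  also have "\<dots> = (\<integral>p. indicator Q p *\<^sub>R C \<partial>lborel)"
    by (rule Bochner_Integration.integral_cong) (simp_all add: G_def const)
  also have "\<dots> = measure lborel Q *\<^sub>R C"
    using Q by simp
  finally show ?thesis
    by (simp add: G_def)
qed

(* Rotating by p turns the pairing with h into the pairing with the twisted rotate of h; averaging
   over p in the unit square turns the latter into the Fourier coefficient. *)
lemma integral_mult_cnj_fourier_coeff:
  fixes u h :: "complex \<times> complex \<Rightarrow> complex"
  assumes u: "square_integrable lborel u" and h: "square_integrable lborel h"
    and equivariant: "\<And>c1 c2 z. cmod c1 = 1 \<Longrightarrow> cmod c2 = 1 \<Longrightarrow> u (rotate2 c1 c2 z) = c1 powi k1 * c2 powi k2 * u z"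
  shows "(\<integral>z. u z * cnj (h z) \<partial>lborel) = (\<integral>z. u z * cnj (fourier_coeff k1 k2 h z) \<partial>lborel)"
proof -
  define R where "R p = rotate2 (turn (fst p)) (turn (snd p))" for p :: "real \<times> real"
  define k where "k p z = h (R p z) * turn (fst p) powi (- k1) * turn (snd p) powi (- k2)" for p z
  have [measurable]: "u \<in> borel_measurable borel" "h \<in> borel_measurable borel"
    using u h by (simp_all add: square_integrable_def)
  have k: "square_integrable lborel (k p)" for p
  proof -
    have "square_integrable lborel (\<lambda>z. (turn (fst p) powi (- k1) * turn (snd p) powi (- k2)) * h (R p z))"
      unfolding R_def by (intro square_integrable_cmult square_integrable_rotate2[OF h]) simp_all
    then show ?thesis
      by (simp add: k_def[abs_def] mult_ac)
  qed
  have norm: "(\<integral>z. norm (u z * cnj (k p z)) \<partial>lborel) = (\<integral>z. cmod (u z) * cmod (h z) \<partial>lborel)" for p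
  proof -
    have "(\<integral>z. cmod (u z) * cmod (h z) \<partial>lborel) = (\<integral>z. cmod (u (R p z)) * cmod (h (R p z)) \<partial>lborel)"
      unfolding R_def by (rule integral_rotate2[symmetric]) simp_all
    then show ?thesis
      by (simp add: R_def k_def equivariant norm_mult norm_power_int)
  qed
  have "(\<integral>z. u z * cnj (k p z) \<partial>lborel) = (\<integral>z. u z * cnj (h z) \<partial>lborel)" for p
    unfolding k_def R_def by (rule integral_mult_cnj_rotate2[symmetric]) (simp_all add: equivariant)
  then have "(\<integral>z. (\<integral>p. indicator (cbox (0, 0) (1, 1)) p *\<^sub>R (u z * cnj (k p z)) \<partial>lborel) \<partial>lborel)
      = measure lborel (cbox (0::real, 0::real) (1, 1)) *\<^sub>R (\<integral>z. u z * cnj (h z) \<partial>lborel)"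
    using integrable_mult_cnj[OF u k] norm emeasure_lborel_cbox_finite[of "(0::real, 0::real)" "(1, 1)"]
    by (intro integral_indicator_average) (simp_all add: k_def R_def top.not_eq_extremum)
  moreover have "(\<integral>p. indicator (cbox (0, 0) (1, 1)) p *\<^sub>R (u z * cnj (k p z)) \<partial>lborel)
      = u z * cnj (fourier_coeff k1 k2 h z)" for z
    unfolding fourier_coeff_def set_lebesgue_integral_def k_def R_def
    by (simp flip: integral_mult_right_zero Bochner_Integration.integral_cnj)
  ultimately show ?thesis
    by (simp add: measure_lborel_cbox_eq Basis_prod_def)
qed

lemma null_sets_fst_eq_0: "{z :: complex \<times> complex. fst z = 0} \<in> null_sets lborel"
proof -
  have "{0 :: complex} \<times> (UNIV :: complex set) \<in> null_sets (lborel \<Otimes>\<^sub>M lborel)"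
    by (rule lborel.times_in_null_sets1) auto
  moreover have "{z :: complex \<times> complex. fst z = 0} = {0} \<times> UNIV"
    by auto
  ultimately show ?thesis
    by (simp add: lborel_prod)
qed

lemma integral_mult_cnj_eq_monomial:
  fixes u h :: "complex \<times> complex \<Rightarrow> complex"
  assumes u: "square_integrable lborel u" and h: "square_integrable lborel h"
    and equivariant: "\<And>c1 c2 z. cmod c1 = 1 \<Longrightarrow> cmod c2 = 1 \<Longrightarrow> u (rotate2 c1 c2 z) = c1 powi k1 * c2 powi k2 * u z"
    and outside: "\<And>z. z \<notin> S \<Longrightarrow> u z = 0"
    and J: "\<And>z. z \<in> S \<Longrightarrow> fst z \<noteq> 0 \<Longrightarrow> fourier_coeff k1 k2 h z = J * monomial k1 k2 z"
  shows "(\<integral>z. u z * cnj (h z) \<partial>lborel) = cnj J * (\<integral>z. u z * cnj (monomial k1 k2 z) \<partial>lborel)"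
proof -
  have [measurable]: "u \<in> borel_measurable borel" "h \<in> borel_measurable borel"
    using u h by (simp_all add: square_integrable_def)
  have "u z * cnj (fourier_coeff k1 k2 h z) = cnj J * (u z * cnj (monomial k1 k2 z))" if "fst z \<noteq> 0" for z
  proof (cases "z \<in> S")
    case True
    then show ?thesis
      using J[OF True that] by simp
  qed (simp add: outside)
  then have "{z \<in> space lborel. u z * cnj (fourier_coeff k1 k2 h z) \<noteq> cnj J * (u z * cnj (monomial k1 k2 z))}
      \<subseteq> {z. fst z = 0}"
    by blast
  then have "AE z in lborel. u z * cnj (fourier_coeff k1 k2 h z) = cnj J * (u z * cnj (monomial k1 k2 z))"
    by (rule AE_I'[OF null_sets_fst_eq_0])
  then have "(\<integral>z. u z * cnj (fourier_coeff k1 k2 h z) \<partial>lborel) = (\<integral>z. cnj J * (u z * cnj (monomial k1 k2 z)) \<partial>lborel)"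
    by (rule integral_cong_AE[rotated 2]) measurable
  moreover have "(\<integral>z. u z * cnj (h z) \<partial>lborel) = (\<integral>z. u z * cnj (fourier_coeff k1 k2 h z) \<partial>lborel)"
    using u h equivariant by (rule integral_mult_cnj_fourier_coeff)
  ultimately show ?thesis
    by simp
qed

section \<open>The projection of an equivariant function\<close>

lemma bergman_proj_equivariant:
  assumes \<gamma>: "0 < \<gamma>" and k1: "0 \<le> k1" and m: "sq_int (monomial k1 k2) (Hdom \<gamma>)"
    and f: "sq_int f (Hdom \<gamma>)"
    and equivariant: "\<And>c1 c2 z. cmod c1 = 1 \<Longrightarrow> cmod c2 = 1 \<Longrightarrow> z \<in> Hdom \<gamma> \<Longrightarrow>
                       f (rotate2 c1 c2 z) = c1 powi k1 * c2 powi k2 * f z"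
  obtains C where "\<And>z. z \<in> Hdom \<gamma> \<Longrightarrow> bergman_proj \<gamma> f z = C * monomial k1 k2 z"
proof -
  define u where "u z = indicator (Hdom \<gamma>) z *\<^sub>R f z" for z
  define v where "v z = indicator (Hdom \<gamma>) z *\<^sub>R monomial k1 k2 z" for z
  define A where "A = (\<integral>z. u z * cnj (v z) \<partial>lborel)"
  define B where "B = (\<integral>z. v z * cnj (v z) \<partial>lborel)"
  define C where "C = A / B"
  have u: "square_integrable lborel u" and v: "square_integrable lborel v"
    using f m by (simp_all add: u_def[abs_def] v_def[abs_def] sq_int_iff_square_integrable)
  have u_outside: "u z = 0" and v_outside: "v z = 0" if "z \<notin> Hdom \<gamma>" for z
    using that by (simp_all add: u_def v_def)
  have u_equivariant: "u (rotate2 c1 c2 z) = c1 powi k1 * c2 powi k2 * u z"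
    and v_equivariant: "v (rotate2 c1 c2 z) = c1 powi k1 * c2 powi k2 * v z"
    if "cmod c1 = 1" "cmod c2 = 1" for c1 c2 z
    using that by (cases "z \<in> Hdom \<gamma>";
        simp add: u_def v_def indicator_rotate2_Hdom equivariant monomial_rotate2)+
  have A_monomial: "A = (\<integral>z. u z * cnj (monomial k1 k2 z) \<partial>lborel)"
    and B_monomial: "B = (\<integral>z. v z * cnj (monomial k1 k2 z) \<partial>lborel)"
    unfolding A_def B_def
    by (intro Bochner_Integration.integral_cong; simp add: u_def v_def split: split_indicator)+
  have AB: "A = C * B"
    using integral_mult_cnj_eq_0[OF v, of u] by (cases "B = 0") (simp_all add: A_def B_def C_def)
  have g: "(\<lambda>z. C * v z) \<in> bergman_space \<gamma>"
    unfolding v_def using restricted_monomial_in_bergman_space[OF \<gamma> k1 m] .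
  have "l2_inner \<gamma> (\<lambda>z. f z - C * v z) h = 0" if h: "h \<in> bergman_space \<gamma>" for h
  proof -
    have h_sq: "square_integrable lborel h"
      using h by (simp add: bergman_space_iff)
    obtain J where J: "\<And>z. z \<in> Hdom \<gamma> \<Longrightarrow> fst z \<noteq> 0 \<Longrightarrow> fourier_coeff k1 k2 h z = J * monomial k1 k2 z"
      using fourier_coeff_eq_monomial[OF \<gamma>] h by (metis bergman_space_iff)
    have Ah: "(\<integral>z. u z * cnj (h z) \<partial>lborel) = cnj J * A"
      using u h_sq u_equivariant u_outside J unfolding A_monomial by (rule integral_mult_cnj_eq_monomial)
    have Bh: "(\<integral>z. v z * cnj (h z) \<partial>lborel) = cnj J * B"
      using v h_sq v_equivariant v_outside J unfolding B_monomial by (rule integral_mult_cnj_eq_monomial)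
    have "l2_inner \<gamma> (\<lambda>z. f z - C * v z) h
        = (\<integral>z. u z * cnj (h z) \<partial>lborel) - C * (\<integral>z. v z * cnj (h z) \<partial>lborel)"
      by (rule l2_inner_diff_cmult[OF u v h_sq]) (simp_all add: u_def v_outside)
    then show ?thesis
      by (simp add: Ah Bh AB)
  qed
  then have "bergman_proj \<gamma> f = (\<lambda>z. C * v z)"
    by (intro bergman_proj_eqI[OF \<gamma> f g])
  then show ?thesis
    by (intro that[of C]) (simp add: v_def)
qed

theorem proposition4p1:
  fixes \<gamma> :: real and \<beta>1 \<beta>2 :: int
  assumes "\<gamma> > 0"
    and "(\<beta>1, \<beta>2) \<in> A2 \<gamma>" and "(\<beta>1, - \<beta>2) \<in> A2 \<gamma>"
  shows "\<exists>C::complex. \<forall>z\<in>Hdom \<gamma>.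
           bergman_proj \<gamma> (\<lambda>z. fst z powi \<beta>1 * cnj (snd z) powi \<beta>2) z
             = C * fst z powi \<beta>1 * snd z powi (- \<beta>2)"
proof -
  define f where "f z = fst z powi \<beta>1 * cnj (snd z) powi \<beta>2" for z :: "complex \<times> complex"
  have \<beta>1: "0 \<le> \<beta>1" and m: "sq_int (monomial \<beta>1 (- \<beta>2)) (Hdom \<gamma>)"
    using assms(3) by (simp_all add: A2_def monomial_def[abs_def])
  have f: "sq_int f (Hdom \<gamma>)"
  proof (rule sq_int_norm_cong[of "monomial \<beta>1 \<beta>2"])
    show "sq_int (monomial \<beta>1 \<beta>2) (Hdom \<gamma>)"
      using assms(2) by (simp add: A2_def monomial_def[abs_def])
    show "f \<in> borel_measurable borel"
      unfolding f_def[abs_def] by measurable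
  qed (simp_all add: assms(1) monomial_def f_def norm_mult norm_power_int)
  have equivariant: "f (rotate2 c1 c2 z) = c1 powi \<beta>1 * c2 powi (- \<beta>2) * f z"
    if "cmod c1 = 1" "cmod c2 = 1" "z \<in> Hdom \<gamma>" for c1 c2 z
    using that cnj_powi_uminus_unit[of c2 "- \<beta>2"]
    by (simp add: f_def rotate2_def power_int_mult_distrib)
  obtain C where "\<And>z. z \<in> Hdom \<gamma> \<Longrightarrow> bergman_proj \<gamma> f z = C * monomial \<beta>1 (- \<beta>2) z"
    using bergman_proj_equivariant[of \<gamma> \<beta>1 "- \<beta>2" f, OF assms(1) \<beta>1 m f equivariant] by blast
  then show ?thesis
    by (auto simp: f_def[abs_def] monomial_def mult.assoc)
qed

end
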